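(* Let $\delta:\,]0,+\infty[\to\mathbb R$ be nonnegative, bounded and continuously differentiable, and consider $\ddot r+\delta(r)\dot r=-1/r^2$, $r>0$. If $r_1\not\equiv r_2$ are two solutions and $r_1(t_* )=r_2(t_* )$ for some $t_*$, then $r_1(t)\neq r_2(t)$ for every $t\neq t_*$ in the common interval of definition of $r_1$ and $r_2$. *)

theory Defs
  imports "HOL-Analysis.Analysis"
begin

definition is_solution :: "(real \<Rightarrow> real) \<Rightarrow> real set \<Rightarrow> (real \<Rightarrow> real) \<Rightarrow> bool" where
  "is_solution \<delta> I r \<longleftrightarrow> is_interval I \<and> open I \<and> I \<noteq> {} \<and>
     (\<forall>t\<in>I. r t > 0) \<and>
     (\<exists>r'. \<forall>t\<in>I. (r has_real_derivative r' t) (at t) \<and>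
               (r' has_real_derivative (- 1 / (r t)^2 - \<delta> (r t) * r' t)) (at t))"

end

theory Submission
  imports Defs
begin

text \<open>Let \<open>u = r\<^sub>1 - r\<^sub>2\<close> and let \<open>\<Delta>\<close> be a primitive of \<open>\<delta>\<close>. Along a solution,
  \<open>r' + \<Delta>(r)\<close> has derivative \<open>-1/r\<^sup>2\<close>, so \<open>w = u' + \<Delta>(r\<^sub>1) - \<Delta>(r\<^sub>2)\<close>
  has derivative \<open>1/r\<^sub>2\<^sup>2 - 1/r\<^sub>1\<^sup>2\<close>, which has the sign of \<open>u\<close>.
  If \<open>u\<close> vanished at \<open>a < b\<close> and were positive in between, then \<open>u'(a) \<ge> 0 \<ge> u'(b)\<close>,
  i.e. \<open>w(a) \<ge> w(b)\<close>, although \<open>w\<close> increases strictly on \<open>[a, b]\<close>. Hence two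
  coincidences force \<open>r\<^sub>1 = r\<^sub>2\<close> on the segment between them, so also \<open>r\<^sub>1' = r\<^sub>2'\<close>
  at an interior point. Since \<open>|u'| \<le> |w| + B |u|\<close> with \<open>B\<close> a bound of \<open>|\<delta>|\<close>, and
  locally \<open>|w'| \<le> K |u|\<close>,
  a contraction estimate on short intervals shows that the set where \<open>(r\<^sub>1, r\<^sub>1')\<close> and
  \<open>(r\<^sub>2, r\<^sub>2')\<close> agree is open; it is also closed in the common interval of
  definition, hence all of it.\<close>

lemma DERIV_nonneg_at_left_minimum:
  fixes f :: "real \<Rightarrow> real"
  assumes f': "(f has_real_derivative l) (at a)" and "a < b"
    and min: "\<And>x. a < x \<Longrightarrow> x < b \<Longrightarrow> f a \<le> f x"
  shows "0 \<le> l"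
proof (rule ccontr)
  assume "\<not> 0 \<le> l"
  then obtain d where "0 < d" and dec: "\<And>h. 0 < h \<Longrightarrow> h < d \<Longrightarrow> f (a + h) < f a"
    using DERIV_neg_dec_right[OF f'] by force
  define h where "h = min (d / 2) ((b - a) / 2)"
  have "0 < h" "h < d" "a + h < b"
    using \<open>0 < d\<close> \<open>a < b\<close> by (auto simp: h_def min_def field_simps)
  then show False
    using dec[of h] min[of "a + h"] by auto
qed

lemma DERIV_nonpos_at_right_minimum:
  fixes f :: "real \<Rightarrow> real"
  assumes f': "(f has_real_derivative l) (at b)" and "a < b"
    and min: "\<And>x. a < x \<Longrightarrow> x < b \<Longrightarrow> f b \<le> f x"
  shows "l \<le> 0"
proof -
  have "((\<lambda>x. f (- x)) has_real_derivative - l) (at (- b))"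
    using f' DERIV_mirror[where x = "- b" and y = l] by simp
  then have "0 \<le> - l"
    by (rule DERIV_nonneg_at_left_minimum[where b = "- a"]) (use \<open>a < b\<close> min in auto)
  then show ?thesis by simp
qed

lemma continuous_on_compact_pos_bound_below:
  fixes f :: "'a::topological_space \<Rightarrow> real"
  assumes "compact S" "continuous_on S f" "\<And>x. x \<in> S \<Longrightarrow> 0 < f x"
  shows "\<exists>c>0. \<forall>x\<in>S. c \<le> f x"
proof (cases "S = {}")
  case False
  then obtain x0 where "x0 \<in> S" "\<forall>x\<in>S. f x0 \<le> f x"
    using continuous_attains_inf[OF assms(1) _ assms(2)] by blast
  then show ?thesis using assms(3) by blast
qed (auto intro: exI[of _ 1])

lemma inverse_square_diff_le:
  fixes c x y :: real
  assumes "0 < c" "c \<le> x" "c \<le> y"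
  shows "\<bar>1 / y\<^sup>2 - 1 / x\<^sup>2\<bar> \<le> 2 / c ^ 3 * \<bar>x - y\<bar>"
proof -
  have "norm (1 / x\<^sup>2 - 1 / y\<^sup>2) \<le> 2 / c ^ 3 * norm (x - y)"
  proof (rule field_differentiable_bound[of "{c..}"])
    fix z :: real assume "z \<in> {c..}"
    then have z: "0 < z" "c \<le> z" using assms by auto
    show "((\<lambda>z. 1 / z\<^sup>2) has_field_derivative - 2 / z ^ 3) (at z within {c..})"
      using z by (auto intro!: derivative_eq_intros simp: power2_eq_square power3_eq_cube field_simps)
    have "c ^ 3 \<le> z ^ 3" using z assms by (intro power_mono) auto
    then show "norm (- 2 / z ^ 3) \<le> 2 / c ^ 3"
      using z assms by (simp add: frac_le)
  qed (use assms in auto)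
  then show ?thesis by (simp add: abs_minus_commute)
qed

lemma positive_interval_between_zeros:
  fixes f :: "real \<Rightarrow> real"
  assumes cont: "continuous_on {a..b} f" and "f a = 0" "f b = 0"
    and x: "a \<le> x" "x \<le> b" "0 < f x"
  obtains a' b' where "a \<le> a'" "a' < b'" "b' \<le> b" "f a' = 0" "f b' = 0"
    "\<And>z. a' < z \<Longrightarrow> z < b' \<Longrightarrow> 0 < f z"
proof -
  define L where "L = {y \<in> {a..x}. f y = 0}"
  define R where "R = {y \<in> {x..b}. f y = 0}"
  have "closed L" "closed R" unfolding L_def R_def
    by (intro continuous_closed_preimage_constant continuous_on_subset[OF cont]; use x in auto)+
  moreover have "a \<in> L" "b \<in> R" "bdd_above L" "bdd_below R"
    using x \<open>f a = 0\<close> \<open>f b = 0\<close> by (auto simp: L_def R_def bdd_above_def bdd_below_def)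
  ultimately have "Sup L \<in> L" "Inf R \<in> R"
    using closed_contains_Sup closed_contains_Inf by blast+
  then have a': "a \<le> Sup L" "Sup L < x" "f (Sup L) = 0"
    and b': "x < Inf R" "Inf R \<le> b" "f (Inf R) = 0"
    using x by (auto simp: L_def R_def order.order_iff_strict)
  show thesis
  proof (rule that[of "Sup L" "Inf R"])
    fix z assume z: "Sup L < z" "z < Inf R"
    show "0 < f z"
    proof (rule ccontr)
      assume "\<not> 0 < f z"
      then consider y where "z \<le> y" "y \<le> x" "f y = 0" | y where "x \<le> y" "y \<le> z" "f y = 0"
        using IVT'[of f z 0 x] IVT2'[of f z 0 x] x z a' b'
        by (cases "z \<le> x") (force intro: continuous_on_subset[OF cont])+
      then show False
      proof cases
        case 1
        then have "y \<in> L" using a' z by (auto simp: L_def)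
        then show False using cSup_upper[OF _ \<open>bdd_above L\<close>] 1 z by fastforce
      next
        case 2
        then have "y \<in> R" using b' z by (auto simp: R_def)
        then show False using cInf_lower[OF _ \<open>bdd_below R\<close>] 2 z by fastforce
      qed
    qed
  qed (use a' b' in auto)
qed

lemma exists_small_contraction:
  fixes h0 K L :: real
  assumes "0 < h0" "0 \<le> K" "0 \<le> L"
  obtains h where "0 < h" "h \<le> h0" "h * (K * h + L) < 1"
proof
  define h where "h = min (min h0 1) (1 / (K + L + 1))"
  show "0 < h" "h \<le> h0" using assms by (auto simp: h_def)
  have "h \<le> 1" "h \<le> 1 / (K + L + 1)" by (auto simp: h_def)
  then have "h * (K + L + 1) \<le> 1" using assms by (simp add: le_divide_eq)
  have "K * h \<le> K" using \<open>h \<le> 1\<close> \<open>0 \<le> K\<close> by (rule mult_left_le)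
  then have "h * (K * h + L) \<le> h * (K + L)"
    using \<open>0 < h\<close> by (intro mult_left_mono) auto
  also have "\<dots> < h * (K + L + 1)" using \<open>0 < h\<close> by simp
  finally show "h * (K * h + L) < 1" using \<open>h * (K + L + 1) \<le> 1\<close> by linarith
qed

lemma abs_diff_le_by_deriv_bound:
  fixes f f' :: "real \<Rightarrow> real" and p h :: real
  defines "S \<equiv> {p - h..p + h}"
  assumes f': "\<And>t. t \<in> S \<Longrightarrow> (f has_real_derivative f' t) (at t within S)"
    and bound: "\<And>t. t \<in> S \<Longrightarrow> \<bar>f' t\<bar> \<le> C" and "t \<in> S"
  shows "\<bar>f t - f p\<bar> \<le> C * h"
proof -
  have "p \<in> S" "convex S" using \<open>t \<in> S\<close> by (auto simp: S_def)
  then have "norm (f t - f p) \<le> C * norm (t - p)"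
    by (intro field_differentiable_bound[OF \<open>convex S\<close> f']) (use bound \<open>t \<in> S\<close> in auto)
  also have "\<dots> \<le> C * h"
    using bound[OF \<open>t \<in> S\<close>] \<open>t \<in> S\<close> by (intro mult_left_mono) (auto simp: S_def)
  finally show ?thesis by simp
qed

lemma differential_inequalities_imp_zero:
  fixes u u' v v' :: "real \<Rightarrow> real" and p h :: real
  defines "S \<equiv> {p - h..p + h}"
  assumes "0 \<le> K" "0 \<le> L" and small: "h * (K * h + L) < 1"
    and "u p = 0" "v p = 0"
    and u': "\<And>t. t \<in> S \<Longrightarrow> (u has_real_derivative u' t) (at t within S)"
    and v': "\<And>t. t \<in> S \<Longrightarrow> (v has_real_derivative v' t) (at t within S)"
    and v'_le: "\<And>t. t \<in> S \<Longrightarrow> \<bar>v' t\<bar> \<le> K * \<bar>u t\<bar>"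
    and u'_le: "\<And>t. t \<in> S \<Longrightarrow> \<bar>u' t\<bar> \<le> \<bar>v t\<bar> + L * \<bar>u t\<bar>"
    and "t \<in> S"
  shows "u t = 0"
proof -
  have "continuous_on S (\<lambda>y. \<bar>u y\<bar>)"
    using u' by (intro continuous_on_rabs DERIV_continuous_on)
  then obtain x0 where "x0 \<in> S" and max: "\<And>y. y \<in> S \<Longrightarrow> \<bar>u y\<bar> \<le> \<bar>u x0\<bar>"
    using continuous_attains_sup[of S "\<lambda>y. \<bar>u y\<bar>"] \<open>t \<in> S\<close> by (auto simp: S_def)
  define M where "M = \<bar>u x0\<bar>"
  \<comment> \<open>Integrating both inequalities outwards from \<open>p\<close> gives \<open>M \<le> h (K h + L) M\<close>.\<close>
  have "0 \<le> M" by (simp add: M_def)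
  have v_le: "\<bar>v y\<bar> \<le> K * M * h" if "y \<in> S" for y
  proof -
    have y: "y \<in> {p - h..p + h}" using that by (simp add: S_def)
    have "\<bar>v y - v p\<bar> \<le> K * M * h"
    proof (rule abs_diff_le_by_deriv_bound[OF v'[unfolded S_def]])
      fix z assume "z \<in> {p - h..p + h}"
      then have "z \<in> S" by (simp add: S_def)
      have "K * \<bar>u z\<bar> \<le> K * M"
        using max[OF \<open>z \<in> S\<close>] \<open>0 \<le> K\<close> unfolding M_def by (rule mult_left_mono)
      then show "\<bar>v' z\<bar> \<le> K * M" using v'_le[OF \<open>z \<in> S\<close>] by linarith
    qed (use y in auto)
    then show ?thesis using \<open>v p = 0\<close> by simp
  qed
  have x0: "x0 \<in> {p - h..p + h}" using \<open>x0 \<in> S\<close> by (simp add: S_def)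
  have "\<bar>u x0 - u p\<bar> \<le> (K * M * h + L * M) * h"
  proof (rule abs_diff_le_by_deriv_bound[OF u'[unfolded S_def]])
    fix z assume "z \<in> {p - h..p + h}"
    then have "z \<in> S" by (simp add: S_def)
    have "L * \<bar>u z\<bar> \<le> L * M"
      using max[OF \<open>z \<in> S\<close>] \<open>0 \<le> L\<close> unfolding M_def by (rule mult_left_mono)
    then show "\<bar>u' z\<bar> \<le> K * M * h + L * M"
      using u'_le[OF \<open>z \<in> S\<close>] v_le[OF \<open>z \<in> S\<close>] by linarith
  qed (use x0 in auto)
  then have "M \<le> (K * M * h + L * M) * h"
    using \<open>u p = 0\<close> by (simp add: M_def)
  also have "\<dots> = M * (h * (K * h + L))"
    by (simp add: algebra_simps)
  finally have "M = 0"
    using small \<open>0 \<le> M\<close> by (auto simp: mult_le_cancel_left1)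
  then show ?thesis using max[OF \<open>t \<in> S\<close>] by (simp add: M_def)
qed

lemma antiderivative_on_positive_reals:
  fixes f :: "real \<Rightarrow> real"
  assumes "\<And>x. 0 < x \<Longrightarrow> isCont f x"
  obtains F where "\<And>x. 0 < x \<Longrightarrow> (F has_real_derivative f x) (at x)"
proof -
  have "\<exists>F. \<forall>x. 0 < ereal x \<longrightarrow> ereal x < \<infinity> \<longrightarrow> (F has_vector_derivative f x) (at x)"
    using assms by (intro einterval_antiderivative) auto
  then obtain F where "\<And>x. 0 < x \<Longrightarrow> (F has_vector_derivative f x) (at x)"
    by auto
  then show thesis
    by (intro that) (simp add: has_real_derivative_iff_has_vector_derivative)
qed

locale solution_pair =
  fixes \<delta> \<Delta> :: "real \<Rightarrow> real" and B :: real and I :: "real set"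
    and r1 r1' r2 r2' :: "real \<Rightarrow> real"
  assumes \<delta>_bounded: "\<And>x. 0 < x \<Longrightarrow> \<bar>\<delta> x\<bar> \<le> B"
    and \<Delta>_deriv: "\<And>x. 0 < x \<Longrightarrow> (\<Delta> has_real_derivative \<delta> x) (at x)"
    and interval: "is_interval I" and open_I: "open I"
    and r1_pos: "\<And>t. t \<in> I \<Longrightarrow> 0 < r1 t"
    and r1_deriv: "\<And>t. t \<in> I \<Longrightarrow> (r1 has_real_derivative r1' t) (at t)"
    and r1'_deriv: "\<And>t. t \<in> I \<Longrightarrow> (r1' has_real_derivative - 1 / (r1 t)^2 - \<delta> (r1 t) * r1' t) (at t)"
    and r2_pos: "\<And>t. t \<in> I \<Longrightarrow> 0 < r2 t"
    and r2_deriv: "\<And>t. t \<in> I \<Longrightarrow> (r2 has_real_derivative r2' t) (at t)"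
    and r2'_deriv: "\<And>t. t \<in> I \<Longrightarrow> (r2' has_real_derivative - 1 / (r2 t)^2 - \<delta> (r2 t) * r2' t) (at t)"
begin

lemma swap_solutions: "solution_pair \<delta> \<Delta> B I r2 r2' r1 r1'"
  using solution_pair_axioms unfolding solution_pair_def by blast

abbreviation gap :: "real \<Rightarrow> real" where "gap t \<equiv> r1 t - r2 t"
abbreviation gap' :: "real \<Rightarrow> real" where "gap' t \<equiv> r1' t - r2' t"

abbreviation momentum_gap :: "real \<Rightarrow> real"
  where "momentum_gap t \<equiv> r1' t - r2' t + \<Delta> (r1 t) - \<Delta> (r2 t)"

lemma \<Delta>_lipschitz: "0 < x \<Longrightarrow> 0 < y \<Longrightarrow> \<bar>\<Delta> x - \<Delta> y\<bar> \<le> B * \<bar>x - y\<bar>"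
  using field_differentiable_bound[of "{0<..}" \<Delta> \<delta> B x y] \<Delta>_deriv \<delta>_bounded
  by (auto simp: has_field_derivative_at_within)

lemma gap_deriv: "t \<in> I \<Longrightarrow> (gap has_real_derivative gap' t) (at t)"
  by (intro DERIV_diff r1_deriv r2_deriv)

lemma momentum_gap_deriv:
  assumes "t \<in> I"
  shows "(momentum_gap has_real_derivative 1 / (r2 t)^2 - 1 / (r1 t)^2) (at t)"
proof -
  have "((\<lambda>t. \<Delta> (r1 t)) has_real_derivative \<delta> (r1 t) * r1' t) (at t)"
    "((\<lambda>t. \<Delta> (r2 t)) has_real_derivative \<delta> (r2 t) * r2' t) (at t)"
    using assms r1_pos r2_pos by (auto intro!: DERIV_chain2[OF \<Delta>_deriv] r1_deriv r2_deriv)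
  from DERIV_diff[OF DERIV_add[OF DERIV_diff[OF r1'_deriv r2'_deriv] this(1)] this(2)]
  show ?thesis using assms by (simp add: algebra_simps)
qed

lemma continuous_on_r1: "continuous_on I r1"
  using r1_deriv by (intro continuous_at_imp_continuous_on ballI DERIV_isCont)

lemma continuous_on_r2: "continuous_on I r2"
  using r2_deriv by (intro continuous_at_imp_continuous_on ballI DERIV_isCont)

lemma continuous_on_gap: "continuous_on I gap"
  using continuous_on_r1 continuous_on_r2 by (rule continuous_on_diff)

lemma continuous_on_gap': "continuous_on I gap'"
  using r1'_deriv r2'_deriv
  by (intro continuous_at_imp_continuous_on ballI continuous_diff DERIV_isCont) auto

lemma continuous_on_momentum_gap: "continuous_on I momentum_gap"
  using momentum_gap_deriv by (intro continuous_at_imp_continuous_on ballI DERIV_isCont)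

lemma atLeastAtMost_subset:
  assumes "a \<in> I" "b \<in> I"
  shows "{a..b} \<subseteq> I"
proof
  fix x assume "x \<in> {a..b}"
  then show "x \<in> I"
    using mem_is_interval_1_I[OF interval assms] by simp
qed

lemma not_above_between_crossings:
  assumes "a < b" "a \<in> I" "b \<in> I" "r1 a = r2 a" "r1 b = r2 b"
    and above: "\<And>t. a < t \<Longrightarrow> t < b \<Longrightarrow> r2 t < r1 t"
  shows False
proof -
  have below: "gap a \<le> gap t" "gap b \<le> gap t" if "a < t" "t < b" for t
    using above[OF that] assms(4,5) by linarith+
  have "0 \<le> gap' a"
    using DERIV_nonneg_at_left_minimum[OF gap_deriv[OF \<open>a \<in> I\<close>] \<open>a < b\<close> below(1)] .
  moreover have "gap' b \<le> 0"
    using DERIV_nonpos_at_right_minimum[OF gap_deriv[OF \<open>b \<in> I\<close>] \<open>a < b\<close> below(2)] .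
  moreover have "momentum_gap a < momentum_gap b"
  proof (rule DERIV_pos_imp_increasing_open[OF \<open>a < b\<close>])
    fix t assume t: "a < t" "t < b"
    then have "t \<in> I" using atLeastAtMost_subset[OF \<open>a \<in> I\<close> \<open>b \<in> I\<close>] by auto
    have "(r2 t)\<^sup>2 < (r1 t)\<^sup>2"
      using above[OF t] r2_pos[OF \<open>t \<in> I\<close>] by (intro power_strict_mono) auto
    then have "0 < 1 / (r2 t)^2 - 1 / (r1 t)^2"
      using r2_pos[OF \<open>t \<in> I\<close>] by (simp add: frac_less2)
    then show "\<exists>y. (momentum_gap has_real_derivative y) (at t) \<and> 0 < y"
      using momentum_gap_deriv[OF \<open>t \<in> I\<close>] by blast
  qed (rule continuous_on_subset[OF continuous_on_momentum_gap atLeastAtMost_subset[OF \<open>a \<in> I\<close> \<open>b \<in> I\<close>]])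
  ultimately show False
    using assms(4,5) by simp
qed

lemma le_between_crossings:
  assumes "a \<in> I" "b \<in> I" "r1 a = r2 a" "r1 b = r2 b" "a \<le> t" "t \<le> b"
  shows "r1 t \<le> r2 t"
proof (rule ccontr)
  assume "\<not> r1 t \<le> r2 t"
  have "continuous_on {a..b} gap"
    using continuous_on_subset[OF continuous_on_gap atLeastAtMost_subset[OF \<open>a \<in> I\<close> \<open>b \<in> I\<close>]] .
  then obtain a' b' where "a \<le> a'" "a' < b'" "b' \<le> b" "gap a' = 0" "gap b' = 0"
    and "\<And>z. a' < z \<Longrightarrow> z < b' \<Longrightarrow> 0 < gap z"
    by (rule positive_interval_between_zeros[where x = t]) (use assms \<open>\<not> r1 t \<le> r2 t\<close> in auto)
  moreover have "a' \<in> I" "b' \<in> I"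
    using calculation(1-3) atLeastAtMost_subset[OF \<open>a \<in> I\<close> \<open>b \<in> I\<close>] by auto
  ultimately show False
    using not_above_between_crossings[of a' b'] by simp
qed

lemma eq_between_crossings:
  assumes "a \<in> I" "b \<in> I" "r1 a = r2 a" "r1 b = r2 b" "a \<le> t" "t \<le> b"
  shows "r1 t = r2 t"
  using le_between_crossings[OF assms]
    solution_pair.le_between_crossings[OF swap_solutions assms(1,2) assms(3,4)[symmetric] assms(5,6)]
  by linarith

lemma eq_near_tangency:
  assumes "p \<in> I" "r1 p = r2 p" "r1' p = r2' p"
  obtains e where "0 < e" "ball p e \<subseteq> I" "\<And>t. t \<in> ball p e \<Longrightarrow> r1 t = r2 t"
proof -
  obtain h0 where "0 < h0" and h0: "cball p h0 \<subseteq> I"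
    using open_I \<open>p \<in> I\<close> open_contains_cball by blast
  have "continuous_on (cball p h0) (\<lambda>t. min (r1 t) (r2 t))"
    using continuous_on_r1 continuous_on_r2 by (intro continuous_on_min continuous_on_subset[OF _ h0])
  then obtain c where "0 < c" and c: "\<And>t. t \<in> cball p h0 \<Longrightarrow> c \<le> r1 t \<and> c \<le> r2 t"
    using continuous_on_compact_pos_bound_below[of "cball p h0"] r1_pos r2_pos h0 by force
  define K where "K = 2 / c ^ 3"
  have "0 \<le> B" using \<delta>_bounded[of 1] by simp
  then obtain h where "0 < h" "h \<le> h0" and small: "h * (K * h + B) < 1"
    using exists_small_contraction[OF \<open>0 < h0\<close>, of K B] \<open>0 < c\<close> by (auto simp: K_def)
  have S: "{p - h..p + h} \<subseteq> cball p h0"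
    using \<open>h \<le> h0\<close> by (auto simp: cball_eq_atLeastAtMost)
  have zero: "gap t = 0" if "t \<in> {p - h..p + h}" for t
  proof (rule differential_inequalities_imp_zero[where u = gap and v = momentum_gap, OF _ _ small])
    fix s assume s: "s \<in> {p - h..p + h}"
    then have "s \<in> I" "c \<le> r1 s" "c \<le> r2 s" using S h0 c by auto
    show "(gap has_real_derivative gap' s) (at s within {p - h..p + h})"
      using gap_deriv[OF \<open>s \<in> I\<close>] by (rule has_field_derivative_at_within)
    show "(momentum_gap has_real_derivative 1 / (r2 s)^2 - 1 / (r1 s)^2) (at s within {p - h..p + h})"
      using momentum_gap_deriv[OF \<open>s \<in> I\<close>] by (rule has_field_derivative_at_within)
    show "\<bar>1 / (r2 s)^2 - 1 / (r1 s)^2\<bar> \<le> K * \<bar>gap s\<bar>"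
      unfolding K_def using inverse_square_diff_le[OF \<open>0 < c\<close> \<open>c \<le> r1 s\<close> \<open>c \<le> r2 s\<close>] .
    show "\<bar>gap' s\<bar> \<le> \<bar>momentum_gap s\<bar> + B * \<bar>gap s\<bar>"
      using \<Delta>_lipschitz[OF r1_pos r2_pos, OF \<open>s \<in> I\<close> \<open>s \<in> I\<close>] by linarith
  qed (use \<open>0 < c\<close> \<open>0 \<le> B\<close> assms that in \<open>auto simp: K_def\<close>)
  have ball: "ball p h \<subseteq> {p - h..p + h}"
    by (auto simp: ball_eq_greaterThanLessThan)
  show thesis
  proof (rule that[OF \<open>0 < h\<close>])
    show "ball p h \<subseteq> I"
      using subset_trans[OF subset_trans[OF ball S] h0] .
    show "r1 t = r2 t" if "t \<in> ball p h" for t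
      using zero[of t] ball that by auto
  qed
qed

lemma eq_if_tangent:
  assumes "p \<in> I" "r1 p = r2 p" "r1' p = r2' p" "t \<in> I"
  shows "r1 t = r2 t"
proof -
  define T where "T = {s \<in> I. r1 s = r2 s \<and> r1' s = r2' s}"
  define V where "V = gap -` (- {0}) \<inter> I \<union> gap' -` (- {0}) \<inter> I"
  have "open T"
    unfolding open_contains_ball
  proof
    fix s assume "s \<in> T"
    then obtain e where "0 < e" "ball s e \<subseteq> I" and eq: "\<And>t. t \<in> ball s e \<Longrightarrow> r1 t = r2 t"
      using eq_near_tangency unfolding T_def by blast
    have "gap' y = 0" if y: "y \<in> ball s e" for y
    proof -
      obtain d where "0 < d" "ball y d \<subseteq> ball s e"
        using openE[OF open_ball y] by blast
      then have "\<forall>z. \<bar>y - z\<bar> < d \<longrightarrow> gap y = gap z"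
        using eq y by (auto simp: dist_real_def subset_eq)
      then show ?thesis
        using DERIV_local_const[OF gap_deriv \<open>0 < d\<close>] y \<open>ball s e \<subseteq> I\<close> by blast
    qed
    then show "\<exists>e>0. ball s e \<subseteq> T"
      using \<open>0 < e\<close> \<open>ball s e \<subseteq> I\<close> eq unfolding T_def by auto
  qed
  moreover have "open V"
    unfolding V_def using continuous_on_open_vimage[OF open_I] continuous_on_gap continuous_on_gap'
    by blast
  moreover have "I \<subseteq> T \<union> V" "T \<inter> V \<inter> I = {}" "p \<in> T \<inter> I"
    using assms by (auto simp: T_def V_def)
  ultimately have "V \<inter> I = {}"
    using connectedD[OF is_interval_connected[OF interval]] by blast
  then show ?thesis using \<open>t \<in> I\<close> by (auto simp: V_def)
qed

lemma eq_if_two_crossings: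
  assumes "a \<in> I" "b \<in> I" "a < b" "r1 a = r2 a" "r1 b = r2 b" "t \<in> I"
  shows "r1 t = r2 t"
proof (rule eq_if_tangent)
  define m where "m = (a + b) / 2"
  have "{a..b} \<subseteq> I" by (rule atLeastAtMost_subset[OF assms(1,2)])
  then show "m \<in> I" using \<open>a < b\<close> by (auto simp: m_def)
  have eq: "r1 s = r2 s" if "a \<le> s" "s \<le> b" for s
    using eq_between_crossings[OF assms(1,2,4,5) that] .
  then show "r1 m = r2 m" using \<open>a < b\<close> by (simp add: m_def)
  have const: "\<forall>y. \<bar>m - y\<bar> < (b - a) / 2 \<longrightarrow> gap m = gap y"
  proof (intro allI impI)
    fix y assume "\<bar>m - y\<bar> < (b - a) / 2"
    then have "a \<le> y" "y \<le> b" unfolding m_def by (auto simp: abs_less_iff field_simps)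
    then show "gap m = gap y" using eq[of y] \<open>r1 m = r2 m\<close> by simp
  qed
  have "gap' m = 0"
    by (rule DERIV_local_const[OF gap_deriv[OF \<open>m \<in> I\<close>] _ const]) (use \<open>a < b\<close> in simp)
  then show "r1' m = r2' m" by simp
qed (rule \<open>t \<in> I\<close>)

end

theorem lemma3p1:
  fixes \<delta> :: "real \<Rightarrow> real" and r1 r2 :: "real \<Rightarrow> real" and I1 I2 :: "real set"
    and tstar t :: real
  assumes nonneg: "\<forall>x>0. \<delta> x \<ge> 0"
    and bounded: "\<exists>B. \<forall>x>0. \<bar>\<delta> x\<bar> \<le> B"
    and C1: "\<exists>\<delta>'. continuous_on {0<..} \<delta>' \<and> (\<forall>x>0. (\<delta> has_real_derivative \<delta>' x) (at x))"
    and sol1: "is_solution \<delta> I1 r1"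
    and sol2: "is_solution \<delta> I2 r2"
    and distinct: "\<exists>s\<in>I1 \<inter> I2. r1 s \<noteq> r2 s"
    and tstar: "tstar \<in> I1 \<inter> I2" "r1 tstar = r2 tstar"
    and t: "t \<in> I1 \<inter> I2" "t \<noteq> tstar"
  shows "r1 t \<noteq> r2 t"
proof
  assume "r1 t = r2 t"
  obtain B where B: "\<And>x. 0 < x \<Longrightarrow> \<bar>\<delta> x\<bar> \<le> B"
    using bounded by blast
  obtain \<delta>' where "\<And>x. 0 < x \<Longrightarrow> (\<delta> has_real_derivative \<delta>' x) (at x)"
    using C1 by blast
  then obtain \<Delta> where \<Delta>: "\<And>x. 0 < x \<Longrightarrow> (\<Delta> has_real_derivative \<delta> x) (at x)"
    using antiderivative_on_positive_reals DERIV_isCont by metis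
  obtain r1' r2' where
    "\<And>t. t \<in> I1 \<Longrightarrow> (r1 has_real_derivative r1' t) (at t) \<and>
       (r1' has_real_derivative - 1 / (r1 t)^2 - \<delta> (r1 t) * r1' t) (at t)"
    "\<And>t. t \<in> I2 \<Longrightarrow> (r2 has_real_derivative r2' t) (at t) \<and>
       (r2' has_real_derivative - 1 / (r2 t)^2 - \<delta> (r2 t) * r2' t) (at t)"
    using sol1 sol2 unfolding is_solution_def by metis
  then interpret solution_pair \<delta> \<Delta> B "I1 \<inter> I2" r1 r1' r2 r2'
    using B \<Delta> sol1 sol2 by unfold_locales (auto simp: is_solution_def intro: is_interval_Int)
  obtain s where "s \<in> I1 \<inter> I2" "r1 s \<noteq> r2 s"
    using distinct by blast
  then show False
    using eq_if_two_crossings[of tstar t s] eq_if_two_crossings[of t tstar s]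
      tstar t \<open>r1 t = r2 t\<close> by (cases "tstar < t") auto
qed

end
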